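(* Let $\alpha\in\mathbb{N}$, let $n\in\mathbb{N}$ with $3\nmid n$ and $n>6\alpha+3$, and let $\mathbb{S}=\langle 6,6\alpha+3,n\rangle$, with Betti elements $\beta_1=\beta_2=12\alpha+6$ and $\beta_3=3n$. Then, with respect to $(6,6\alpha+3,n)$, the factorizations of $\beta_1=\beta_2$ are exactly $(2\alpha+1,0,0)$ and $(0,2,0)$, and the factorizations of $\beta_3$ are exactly $(0,0,3)$ and $\left(\frac{n-k(2\alpha+1)}{2},k,0\right)$ for $k\in\mathbb{N}$ with $k\le\frac{n}{2\alpha+1}$ and $2\mid n-k(2\alpha+1)$.
   Context: $\mathbb{N}=\{0,1,2,\dots\}$. $\langle a_1,\dots,a_e\rangle$ is the set of $\mathbb{N}$-linear combinations of $a_1,\dots,a_e$. A factorization of $a\in\langle a_1,a_2,a_3\rangle$ is a tuple $(\eta_1,\eta_2,\eta_3)\in\mathbb{N}^3$ with $\eta_1a_1+\eta_2a_2+\eta_3a_3=a$. *)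

theory Defs
  imports Main
begin

definition factorizations :: "nat \<Rightarrow> nat \<Rightarrow> nat \<Rightarrow> nat \<Rightarrow> (nat \<times> nat \<times> nat) set" where
  "factorizations a1 a2 a3 a =
     {(e1, e2, e3). e1 * a1 + e2 * a2 + e3 * a3 = a}"

end

theory Submission
  imports Defs "HOL-Computational_Algebra.Primes"
begin

text \<open>Write \<open>6\<alpha> + 3 = 3b\<close> with \<open>b = 2\<alpha> + 1\<close> odd. Reducing a factorization modulo 3
  kills the first two generators, so 3 divides the third coordinate whenever 3 divides the
  element and not \<open>n\<close>. For \<open>6b < 2n\<close> this forces \<open>e\<^sub>3 = 0\<close>, leaving \<open>2e\<^sub>1 + b e\<^sub>2 = 2b\<close>,
  whose only solutions for odd \<open>b\<close> are \<open>(b, 0)\<close> and \<open>(0, 2)\<close>. For \<open>3n\<close> it forces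
  \<open>e\<^sub>3 \<in> {0, 3}\<close>, and \<open>e\<^sub>3 = 0\<close> leaves exactly the solutions of \<open>2e\<^sub>1 + b e\<^sub>2 = n\<close>.\<close>

lemma mem_factorizations_iff [simp]:
  "(e1, e2, e3) \<in> factorizations a1 a2 a3 a \<longleftrightarrow> e1 * a1 + e2 * a2 + e3 * a3 = a"
  by (simp add: factorizations_def)

lemma prime_dvd_third_coordinate:
  fixes p :: nat
  assumes "(e1, e2, e3) \<in> factorizations a1 a2 a3 a"
    and "prime p" "p dvd a1" "p dvd a2" "p dvd a" "\<not> p dvd a3"
  shows "p dvd e3"
proof -
  have "a = e1 * a1 + e2 * a2 + e3 * a3"
    using assms(1) by simp
  then have "p dvd e3 * a3"
    using assms(3-5) by (simp add: dvd_add_right_iff)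
  then show ?thesis
    using assms(2,6) by (simp add: prime_dvd_mult_iff)
qed

lemma odd_linear_solutions_double:
  fixes b x y :: nat
  assumes "odd b"
  shows "2 * x + y * b = 2 * b \<longleftrightarrow> (x, y) = (b, 0) \<or> (x, y) = (0, 2)"
proof
  assume eq: "2 * x + y * b = 2 * b"
  then have "y * b \<le> 2 * b" by linarith
  then have "y \<le> 2"
    using assms by (cases "b = 0") auto
  moreover have "y \<noteq> 1"
  proof
    assume "y = 1"
    then have "b = 2 * x"
      using eq by simp
    then show False
      using assms by simp
  qed
  ultimately consider "y = 0" | "y = 2" by linarith
  then show "(x, y) = (b, 0) \<or> (x, y) = (0, 2)"
    using eq by cases simp_all
qed auto

lemma factorizations_6_3b_n_of_6b:
  fixes b n :: nat
  assumes "odd b" "\<not> 3 dvd n" "3 * b < n"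
  shows "factorizations 6 (3 * b) n (6 * b) = {(b, 0, 0), (0, 2, 0)}"
proof (intro set_eqI iffI)
  fix e :: "nat \<times> nat \<times> nat"
  obtain e1 e2 e3 where e: "e = (e1, e2, e3)" by (cases e) blast
  assume "e \<in> factorizations 6 (3 * b) n (6 * b)"
  then have fac: "(e1, e2, e3) \<in> factorizations 6 (3 * b) n (6 * b)"
    using e by simp
  have "3 dvd e3"
    using prime_dvd_third_coordinate[OF fac] assms(2) by simp
  moreover have "e3 * n \<le> 6 * b"
    using fac unfolding mem_factorizations_iff by linarith
  then have "e3 * n < 2 * n"
    using assms(3) by linarith
  then have "e3 < 2"
    by simp
  ultimately have "e3 = 0" by auto
  then have "2 * e1 + e2 * b = 2 * b"
    using fac by simp
  then show "e \<in> {(b, 0, 0), (0, 2, 0)}"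
    using odd_linear_solutions_double[OF assms(1)] e \<open>e3 = 0\<close> by auto
qed auto

lemma factorizations_6_3b_n_of_3n:
  fixes b n :: nat
  assumes "b > 0" "\<not> 3 dvd n"
  shows "factorizations 6 (3 * b) n (3 * n) =
    {(0, 0, 3)} \<union> {(x, k, 0) | x k. 2 * x + k * b = n}"
proof (intro set_eqI iffI)
  fix e :: "nat \<times> nat \<times> nat"
  obtain e1 e2 e3 where e: "e = (e1, e2, e3)" by (cases e) blast
  assume "e \<in> factorizations 6 (3 * b) n (3 * n)"
  then have fac: "(e1, e2, e3) \<in> factorizations 6 (3 * b) n (3 * n)"
    using e by simp
  have "3 dvd e3"
    using prime_dvd_third_coordinate[OF fac] assms(2) by simp
  have "e3 * n \<le> 3 * n"
    using fac unfolding mem_factorizations_iff by linarith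
  moreover have "n \<noteq> 0"
    using assms(2) by (metis dvd_0_right)
  ultimately have "e3 \<le> 3"
    by simp
  with \<open>3 dvd e3\<close> consider "e3 = 0" | "e3 = 3" by fastforce
  then show "e \<in> {(0, 0, 3)} \<union> {(x, k, 0) | x k. 2 * x + k * b = n}"
  proof cases
    case 1
    then have "3 * (2 * e1 + e2 * b) = 3 * n"
      using fac by simp
    then show ?thesis
      using e 1 by simp
  next
    case 2
    then show ?thesis
      using e fac assms(1) by simp
  qed
qed auto

lemma linear_solutions_as_image:
  fixes b n :: nat
  shows "{((n - k * b) div 2, k, 0::nat) | k. k * b \<le> n \<and> 2 dvd (n - k * b)} =
    {(x, k, 0) | x k. 2 * x + k * b = n}"
proof (intro set_eqI iffI)
  fix e :: "nat \<times> nat \<times> nat"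
  assume "e \<in> {((n - k * b) div 2, k, 0::nat) | k. k * b \<le> n \<and> 2 dvd (n - k * b)}"
  then obtain k where "e = ((n - k * b) div 2, k, 0)" "k * b \<le> n" "2 dvd (n - k * b)"
    by blast
  then show "e \<in> {(x, k, 0) | x k. 2 * x + k * b = n}"
    by (auto elim!: dvdE)
next
  fix e :: "nat \<times> nat \<times> nat"
  assume "e \<in> {(x, k, 0) | x k. 2 * x + k * b = n}"
  then obtain x k where "e = (x, k, 0)" "2 * x + k * b = n"
    by blast
  then have "e = ((n - k * b) div 2, k, 0) \<and> k * b \<le> n \<and> 2 dvd (n - k * b)"
    by auto
  then show "e \<in> {((n - k * b) div 2, k, 0::nat) | k. k * b \<le> n \<and> 2 dvd (n - k * b)}"
    by blast
qed

theorem theorem9: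
  fixes \<alpha> n :: nat
  assumes "\<not> (3 dvd n)" and "n > 6 * \<alpha> + 3"
  shows "factorizations 6 (6 * \<alpha> + 3) n (12 * \<alpha> + 6) = {(2 * \<alpha> + 1, 0, 0), (0, 2, 0)} \<and>
         factorizations 6 (6 * \<alpha> + 3) n (3 * n) =
           {(0, 0, 3)} \<union>
           {((n - k * (2 * \<alpha> + 1)) div 2, k, 0) | k :: nat.
              k * (2 * \<alpha> + 1) \<le> n \<and> 2 dvd (n - k * (2 * \<alpha> + 1))}"
proof -
  define b where "b = 2 * \<alpha> + 1"
  have gens: "6 * \<alpha> + 3 = 3 * b" "12 * \<alpha> + 6 = 6 * b"
    by (simp_all add: b_def)
  have "odd b" "b > 0" "3 * b < n"
    using assms(2) by (simp_all add: b_def)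
  then show ?thesis
    unfolding gens b_def[symmetric] linear_solutions_as_image
    using factorizations_6_3b_n_of_6b factorizations_6_3b_n_of_3n assms(1) by simp
qed

end
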